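(* Assume $\mathcal{T}$ is a tree. There is a constant $m_1$ such that for all measurable locally bounded functions $w_i,x_i,y_i$ ($i\in\mathcal{I}$), $z_j$ ($j\in\mathcal{J}$), $\psi_{ij}$ (with $\psi_{ij}=0$ for $i\not\sim j$) on $[0,\infty)$ satisfying $$x_i(t)=w_i(t)-\sum_{j\in\mathcal{J}}\mu_{ij}\int_0^t\psi_{ij}(s)ds-\theta_i\int_0^ty_i(s)ds,\quad \sum_{j\in\mathcal{J}}\psi_{ij}=x_i-y_i\ \ (i\in\mathcal{I}),\quad \sum_{i\in\mathcal{I}}\psi_{ij}=-z_j\ \ (j\in\mathcal{J}),$$ we have $$\|\mathfrak{J}\psi(t)\|+\|x(t)\|\le m_1\big(\|w\|_t^*+\|\mathfrak{J}y\|_t^*+\|\mathfrak{J}z\|_t^*\big),\qquad t\ge0;$$ $m_1$ does not depend on $\psi,w,x,y,z$ or $t$.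
   Context: $\mathcal{I}=\{1,\dots,I\}$, $\mathcal{J}=\{I+1,\dots,I+J\}$, $\mathcal{E}\subset\mathcal{I}\times\mathcal{J}$, $i\sim j$ iff $(i,j)\in\mathcal{E}$; $\mathcal{T}$ is the bipartite graph with vertices $\mathcal{I}\cup\mathcal{J}$ and edges $\mathcal{E}$. Constants $\mu_{ij}>0$ for $(i,j)\in\mathcal{E}$, $\mu_{ij}=0$ otherwise, $\theta_i\ge0$. $\mathfrak{J}f(t)=\int_0^tf(s)ds$ (applied componentwise to vector/array-valued functions). $\|a\|$ denotes the sum of absolute values of the entries of a vector or array, and $\|f\|_t^*=\sup_{0\le s\le t}\|f(s)\|$. *)

theory Defs
  imports "HOL-Analysis.Analysis"
begin

definition ug_connected :: "'a set \<Rightarrow> ('a \<Rightarrow> 'a \<Rightarrow> bool) \<Rightarrow> bool" where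
  "ug_connected V adj \<longleftrightarrow>
     (\<forall>u\<in>V. \<forall>v\<in>V. (\<lambda>a b. a \<in> V \<and> b \<in> V \<and> adj a b)\<^sup>*\<^sup>* u v)"

definition ug_has_cycle :: "'a set \<Rightarrow> ('a \<Rightarrow> 'a \<Rightarrow> bool) \<Rightarrow> bool" where
  "ug_has_cycle V adj \<longleftrightarrow>
     (\<exists>vs. length vs \<ge> 3 \<and> distinct vs \<and> set vs \<subseteq> V \<and>
        (\<forall>k < length vs. adj (vs ! k) (vs ! ((k + 1) mod length vs))))"

definition ug_tree :: "'a set \<Rightarrow> ('a \<Rightarrow> 'a \<Rightarrow> bool) \<Rightarrow> bool" where
  "ug_tree V adj \<longleftrightarrow> V \<noteq> {} \<and> ug_connected V adj \<and> \<not> ug_has_cycle V adj"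

definition bip_adj :: "(nat \<times> nat) set \<Rightarrow> nat \<Rightarrow> nat \<Rightarrow> bool" where
  "bip_adj E a b \<longleftrightarrow> (a, b) \<in> E \<or> (b, a) \<in> E"

definition meas_locbdd :: "(real \<Rightarrow> real) \<Rightarrow> bool" where
  "meas_locbdd f \<longleftrightarrow> f \<in> borel_measurable (restrict_space lborel {0..}) \<and>
     (\<forall>t\<ge>0. \<exists>B. \<forall>s\<in>{0..t}. \<bar>f s\<bar> \<le> B)"

definition Jint :: "(real \<Rightarrow> real) \<Rightarrow> real \<Rightarrow> real" where
  "Jint f t = (LINT s:{0..t}|lborel. f s)"

end

theory Submission
  imports Defs
begin

text \<open>Integrate the network equations: with \<open>\<Psi>\<^sub>i\<^sub>j = Jint \<psi>\<^sub>i\<^sub>j\<close> and \<open>X\<^sub>i = Jint x\<^sub>i\<close>, the row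
  sums give \<open>\<Sum>\<^sub>j \<Psi>\<^sub>i\<^sub>j = X\<^sub>i - Jint y\<^sub>i\<close> and the column sums \<open>\<Sum>\<^sub>i \<Psi>\<^sub>i\<^sub>j = - Jint z\<^sub>j\<close>.
  Each \<open>\<Psi>\<^sub>i\<^sub>j\<close> is bounded by well-founded induction over the edges of the tree: for an
  edge \<open>(i, j)\<close>, the column equation at another neighbour \<open>j'\<close> of \<open>i\<close> bounds \<open>\<Psi>\<close> on \<open>(i, j')\<close>
  by its values on the edges beyond \<open>j'\<close>, which lie in a smaller subtree. The row equation at \<open>i\<close> then
  ties \<open>\<Psi>\<^sub>i\<^sub>j\<close> to \<open>X\<^sub>i\<close>, and substituting it into the equation for \<open>x\<^sub>i\<close> yields
  \<open>x\<^sub>i = g - \<mu>\<^sub>i\<^sub>j X\<^sub>i\<close> with \<open>g\<close> already bounded. This linear feedback keeps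
  \<open>\<bar>X\<^sub>i\<bar> \<le> sup \<bar>g\<bar> / \<mu>\<^sub>i\<^sub>j\<close>. All constants come from the network alone, so the bounds
  are uniform over solutions.\<close>

section \<open>Integrals of measurable locally bounded functions\<close>

lemma set_integrable_Jint:
  assumes "meas_locbdd f" "0 \<le> t"
  shows "set_integrable lborel {0..t} f"
proof -
  obtain B where B: "\<forall>s\<in>{0..t}. \<bar>f s\<bar> \<le> B"
    using assms unfolding meas_locbdd_def by blast
  have "(\<lambda>s. if s \<in> {0..} then f s else 0) \<in> borel_measurable lborel"
    using assms(1) unfolding meas_locbdd_def
    by (subst (asm) measurable_restrict_space_iff[where c=0]) auto
  then have "integrable lborel (\<lambda>s. indicator {0..t} s *\<^sub>R (if s \<in> {0..} then f s else 0))"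
    by (intro integrableI_bounded_set_indicator[where B=B]) (use B assms in auto)
  also have "(\<lambda>s. indicator {0..t} s *\<^sub>R (if s \<in> {0..} then f s else 0)) =
             (\<lambda>s. indicator {0..t} s *\<^sub>R f s)"
    by (auto simp: indicator_def)
  finally show ?thesis
    unfolding set_integrable_def .
qed

lemma
  assumes "meas_locbdd f" "0 \<le> t"
  shows integrable_on_Jint: "f integrable_on {0..t}"
    and Jint_eq_integral: "Jint f t = integral {0..t} f"
  using set_borel_integral_eq_integral[OF set_integrable_Jint[OF assms]]
  unfolding Jint_def by auto

lemma Jint_cong: "(\<And>s. s \<in> {0..t} \<Longrightarrow> f s = g s) \<Longrightarrow> Jint f t = Jint g t"
  unfolding Jint_def by (rule set_lebesgue_integral_cong) auto

lemma Jint_0: "meas_locbdd f \<Longrightarrow> Jint f 0 = 0"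
  by (simp add: Jint_eq_integral)

lemma Jint_diff:
  assumes "meas_locbdd f" "meas_locbdd g" "0 \<le> t"
  shows "Jint (\<lambda>s. f s - g s) t = Jint f t - Jint g t"
  using assms unfolding Jint_def by (simp add: set_integrable_Jint)

lemma Jint_uminus:
  assumes "meas_locbdd f" "0 \<le> t"
  shows "Jint (\<lambda>s. - f s) t = - Jint f t"
  using assms unfolding Jint_def by (simp add: set_integral_uminus set_integrable_Jint)

lemma Jint_sum:
  assumes "finite K" "\<And>k. k \<in> K \<Longrightarrow> meas_locbdd (f k)" "0 \<le> t"
  shows "Jint (\<lambda>s. \<Sum>k\<in>K. f k s) t = (\<Sum>k\<in>K. Jint (f k) t)"
proof -
  have "(LBINT s. (\<Sum>k\<in>K. indicator {0..t} s *\<^sub>R f k s)) =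
        (\<Sum>k\<in>K. LBINT s. indicator {0..t} s *\<^sub>R f k s)"
    by (rule Bochner_Integration.integral_sum) (use assms set_integrable_Jint in \<open>auto simp: set_integrable_def\<close>)
  then show ?thesis
    unfolding Jint_def set_lebesgue_integral_def by (simp add: sum_distrib_left)
qed

lemma continuous_on_Jint:
  assumes "meas_locbdd f" "0 \<le> t"
  shows "continuous_on {0..t} (Jint f)"
proof -
  have "continuous_on {0..t} (\<lambda>s. integral {0..s} f)"
    by (rule indefinite_integral_continuous_1) (rule integrable_on_Jint[OF assms])
  then show ?thesis
    by (rule continuous_on_eq) (use Jint_eq_integral[OF assms(1)] in auto)
qed

lemma Jint_locally_bounded:
  assumes "meas_locbdd f" "0 \<le> t"
  shows "\<exists>B. \<forall>s\<in>{0..t}. \<bar>Jint f s\<bar> \<le> B"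
  using compact_imp_bounded[OF compact_continuous_image[OF continuous_on_Jint[OF assms] compact_Icc]]
  unfolding bounded_iff by auto

lemma Jint_antimono_if_nonpos:
  assumes "meas_locbdd f" "0 \<le> a" "a \<le> b" "\<And>r. r \<in> {a<..b} \<Longrightarrow> f r \<le> 0"
  shows "Jint f b \<le> Jint f a"
proof -
  have f_int: "f integrable_on {0..b}"
    using assms by (intro integrable_on_Jint) auto
  define g where "g r = (if r = a then 0 else f r)" for r
  have "integral {a..b} f = integral {a..b} g"
    by (rule integral_spike[of "{a}"]) (auto simp: g_def)
  also have "\<dots> \<le> integral {a..b} (\<lambda>_. 0)"
  proof (rule integral_le)
    show "g integrable_on {a..b}"
      by (rule integrable_spike[OF integrable_subinterval_real[OF f_int], where S="{a}"])
        (auto simp: g_def assms)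
  qed (use assms in \<open>auto simp: g_def\<close>)
  finally have "integral {a..b} f \<le> 0"
    by simp
  moreover have "integral {0..a} f + integral {a..b} f = integral {0..b} f"
    by (rule Henstock_Kurzweil_Integration.integral_combine[OF assms(2,3) f_int])
  ultimately show ?thesis
    using assms Jint_eq_integral[OF assms(1)] by auto
qed

section \<open>A comparison principle for linear feedback\<close>

lemma Jint_le_of_linear_feedback:
  assumes f: "meas_locbdd f" and \<mu>: "0 < \<mu>"
    and feedback: "\<And>r. r \<in> {0..t} \<Longrightarrow> f r = g r - \<mu> * Jint f r"
    and g_le: "\<And>r. r \<in> {0..t} \<Longrightarrow> g r \<le> K" and K: "0 \<le> K" and s: "s \<in> {0..t}"
  shows "Jint f s \<le> K / \<mu>"
proof -
  \<comment> \<open>After \<open>Sup A\<close>, the last time up to \<open>s\<close> with \<open>Jint f \<le> K / \<mu>\<close>, the feedback makes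
    \<open>f\<close> nonpositive, so \<open>Jint f\<close> cannot grow beyond \<open>K / \<mu>\<close> there.\<close>
  define A where "A = {0..s} \<inter> Jint f -` {..K / \<mu>}"
  have "closed A"
    unfolding A_def using s
    by (intro continuous_closed_preimage continuous_on_Jint[OF f]) auto
  moreover have "0 \<in> A"
    using s K \<mu> by (simp add: A_def Jint_0[OF f])
  moreover have bdd: "bdd_above A"
    unfolding A_def by (rule bdd_aboveI[where M=s]) auto
  ultimately have "Sup A \<in> A"
    by (intro closed_contains_Sup) auto
  then have s0: "0 \<le> Sup A" "Sup A \<le> s" "Jint f (Sup A) \<le> K / \<mu>"
    by (auto simp: A_def)
  have "f r \<le> 0" if r: "r \<in> {Sup A<..s}" for r
  proof -
    have "r \<notin> A"
      using r cSup_upper[OF _ bdd] by force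
    then have "K < \<mu> * Jint f r"
      using r s0 \<mu> by (auto simp: A_def field_simps)
    moreover have "r \<in> {0..t}"
      using r s0 s by auto
    ultimately show ?thesis
      using feedback g_le by fastforce
  qed
  then have "Jint f s \<le> Jint f (Sup A)"
    by (intro Jint_antimono_if_nonpos[OF f s0(1,2)])
  with s0 show ?thesis
    by linarith
qed

lemma abs_Jint_le_of_linear_feedback:
  assumes f: "meas_locbdd f" and \<mu>: "0 < \<mu>"
    and feedback: "\<And>r. r \<in> {0..t} \<Longrightarrow> f r = g r - \<mu> * Jint f r"
    and g_le: "\<And>r. r \<in> {0..t} \<Longrightarrow> \<bar>g r\<bar> \<le> K" and s: "s \<in> {0..t}"
  shows "\<bar>Jint f s\<bar> \<le> K / \<mu>"
proof -
  have K: "0 \<le> K"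
    using g_le[of 0] s by auto
  have "Jint f s \<le> K / \<mu>"
    using g_le by (intro Jint_le_of_linear_feedback[OF f \<mu> feedback _ K s]) (auto simp: abs_le_iff)
  moreover have "meas_locbdd (\<lambda>r. - f r)"
    using f by (auto simp: meas_locbdd_def borel_measurable_uminus)
  moreover have "Jint (\<lambda>r. - f r) r = - Jint f r" if "r \<in> {0..t}" for r
    using that by (simp add: Jint_uminus[OF f])
  ultimately have "- Jint f s \<le> K / \<mu>"
    using Jint_le_of_linear_feedback[of "\<lambda>r. - f r" \<mu> t "\<lambda>r. - g r" K s] \<mu> feedback g_le K s
    by (auto simp: abs_le_iff)
  then show ?thesis
    using \<open>Jint f s \<le> K / \<mu>\<close> by linarith
qed

section \<open>Uniform domination over a family of functions\<close>

text \<open>Bounding \<open>F\<close> on all of \<open>[0, t]\<close> by \<open>N\<close> at the horizon \<open>t\<close> avoids any monotonicity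
  assumption on \<open>N\<close>.\<close>

definition dominated :: "'s set \<Rightarrow> ('s \<Rightarrow> real \<Rightarrow> real) \<Rightarrow> ('s \<Rightarrow> real \<Rightarrow> real) \<Rightarrow> bool" where
  "dominated \<Omega> N F \<longleftrightarrow> (\<exists>K. \<forall>\<sigma>\<in>\<Omega>. \<forall>t\<ge>0. \<forall>s\<in>{0..t}. \<bar>F \<sigma> s\<bar> \<le> K * N \<sigma> t)"

lemma dominated_cong:
  assumes "dominated \<Omega> N G" "\<And>\<sigma> s. \<sigma> \<in> \<Omega> \<Longrightarrow> 0 \<le> s \<Longrightarrow> F \<sigma> s = G \<sigma> s"
  shows "dominated \<Omega> N F"
  using assms unfolding dominated_def by (metis atLeastAtMost_iff)

lemma dominated_zero: "dominated \<Omega> N (\<lambda>\<sigma> s. 0)"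
  unfolding dominated_def by (rule exI[of _ 0]) auto

lemma dominated_abs: "dominated \<Omega> N F \<Longrightarrow> dominated \<Omega> N (\<lambda>\<sigma> s. \<bar>F \<sigma> s\<bar>)"
  unfolding dominated_def by simp

lemma dominated_uminus: "dominated \<Omega> N F \<Longrightarrow> dominated \<Omega> N (\<lambda>\<sigma> s. - F \<sigma> s)"
  unfolding dominated_def by simp

lemma dominated_add:
  assumes "dominated \<Omega> N F" "dominated \<Omega> N G"
  shows "dominated \<Omega> N (\<lambda>\<sigma> s. F \<sigma> s + G \<sigma> s)"
proof -
  obtain K L where "\<forall>\<sigma>\<in>\<Omega>. \<forall>t\<ge>0. \<forall>s\<in>{0..t}. \<bar>F \<sigma> s\<bar> \<le> K * N \<sigma> t"
    and "\<forall>\<sigma>\<in>\<Omega>. \<forall>t\<ge>0. \<forall>s\<in>{0..t}. \<bar>G \<sigma> s\<bar> \<le> L * N \<sigma> t"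
    using assms unfolding dominated_def by blast
  then have "\<forall>\<sigma>\<in>\<Omega>. \<forall>t\<ge>0. \<forall>s\<in>{0..t}. \<bar>F \<sigma> s + G \<sigma> s\<bar> \<le> (K + L) * N \<sigma> t"
    by (auto simp: distrib_right intro!: order_trans[OF abs_triangle_ineq] add_mono)
  then show ?thesis
    unfolding dominated_def by blast
qed

lemma dominated_diff:
  "dominated \<Omega> N F \<Longrightarrow> dominated \<Omega> N G \<Longrightarrow> dominated \<Omega> N (\<lambda>\<sigma> s. F \<sigma> s - G \<sigma> s)"
  using dominated_add[of \<Omega> N F "\<lambda>\<sigma> s. - G \<sigma> s"] dominated_uminus[of \<Omega> N G] by simp

lemma dominated_cmult:
  assumes "dominated \<Omega> N F"
  shows "dominated \<Omega> N (\<lambda>\<sigma> s. c * F \<sigma> s)"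
proof -
  obtain K where "\<forall>\<sigma>\<in>\<Omega>. \<forall>t\<ge>0. \<forall>s\<in>{0..t}. \<bar>F \<sigma> s\<bar> \<le> K * N \<sigma> t"
    using assms unfolding dominated_def by blast
  then have "\<forall>\<sigma>\<in>\<Omega>. \<forall>t\<ge>0. \<forall>s\<in>{0..t}. \<bar>c * F \<sigma> s\<bar> \<le> (\<bar>c\<bar> * K) * N \<sigma> t"
    by (auto simp: abs_mult mult.assoc intro!: mult_left_mono)
  then show ?thesis
    unfolding dominated_def by blast
qed

lemma dominated_sum:
  "finite A \<Longrightarrow> (\<And>a. a \<in> A \<Longrightarrow> dominated \<Omega> N (F a)) \<Longrightarrow>
    dominated \<Omega> N (\<lambda>\<sigma> s. \<Sum>a\<in>A. F a \<sigma> s)"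
  by (induction A rule: finite_induct) (auto intro: dominated_zero dominated_add)

lemma dominated_Jint_of_linear_feedback:
  assumes \<mu>: "0 < \<mu>" and g: "dominated \<Omega> N g"
    and f: "\<And>\<sigma>. \<sigma> \<in> \<Omega> \<Longrightarrow> meas_locbdd (f \<sigma>)"
    and feedback: "\<And>\<sigma> s. \<sigma> \<in> \<Omega> \<Longrightarrow> 0 \<le> s \<Longrightarrow> f \<sigma> s = g \<sigma> s - \<mu> * Jint (f \<sigma>) s"
  shows "dominated \<Omega> N (\<lambda>\<sigma>. Jint (f \<sigma>))"
proof -
  obtain K where K: "\<forall>\<sigma>\<in>\<Omega>. \<forall>t\<ge>0. \<forall>s\<in>{0..t}. \<bar>g \<sigma> s\<bar> \<le> K * N \<sigma> t"
    using g unfolding dominated_def by blast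
  have "\<bar>Jint (f \<sigma>) s\<bar> \<le> K / \<mu> * N \<sigma> t" if "\<sigma> \<in> \<Omega>" "0 \<le> t" "s \<in> {0..t}" for \<sigma> t s
    using abs_Jint_le_of_linear_feedback[OF f \<mu>, of \<sigma> t "g \<sigma>" "K * N \<sigma> t" s] that K feedback
    by auto
  then show ?thesis
    unfolding dominated_def by blast
qed

definition sup_norm :: "'k set \<Rightarrow> ('k \<Rightarrow> real \<Rightarrow> real) \<Rightarrow> real \<Rightarrow> real" where
  "sup_norm K f t = (SUP s\<in>{0..t}. \<Sum>k\<in>K. \<bar>f k s\<bar>)"

lemma sum_abs_le_sup_norm:
  assumes "finite K" "\<And>k. k \<in> K \<Longrightarrow> \<exists>B. \<forall>s\<in>{0..t}. \<bar>f k s\<bar> \<le> B" "s \<in> {0..t}"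
  shows "(\<Sum>k\<in>K. \<bar>f k s\<bar>) \<le> sup_norm K f t"
proof -
  obtain B where B: "\<And>k s. k \<in> K \<Longrightarrow> s \<in> {0..t} \<Longrightarrow> \<bar>f k s\<bar> \<le> B k"
    using assms(2) by metis
  have "bdd_above ((\<lambda>s. \<Sum>k\<in>K. \<bar>f k s\<bar>) ` {0..t})"
    by (rule bdd_aboveI2[where M="\<Sum>k\<in>K. B k"]) (use B in \<open>auto intro: sum_mono\<close>)
  then show ?thesis
    unfolding sup_norm_def using assms(3) by (rule cSUP_upper2) simp
qed

lemma sup_norm_nonneg:
  assumes "finite K" "\<And>k. k \<in> K \<Longrightarrow> \<exists>B. \<forall>s\<in>{0..t}. \<bar>f k s\<bar> \<le> B" "0 \<le> t"
  shows "0 \<le> sup_norm K f t"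
proof -
  have "0 \<le> (\<Sum>k\<in>K. \<bar>f k 0\<bar>)"
    by (simp add: sum_nonneg)
  also have "\<dots> \<le> sup_norm K f t"
    by (rule sum_abs_le_sup_norm) (use assms in auto)
  finally show ?thesis .
qed

lemma dominated_by_sup_norm:
  assumes "finite K" "k \<in> K"
    and bounded: "\<And>\<sigma> t k. \<sigma> \<in> \<Omega> \<Longrightarrow> 0 \<le> t \<Longrightarrow> k \<in> K \<Longrightarrow> \<exists>B. \<forall>s\<in>{0..t}. \<bar>f \<sigma> k s\<bar> \<le> B"
    and le_N: "\<And>\<sigma> t. \<sigma> \<in> \<Omega> \<Longrightarrow> 0 \<le> t \<Longrightarrow> sup_norm K (f \<sigma>) t \<le> N \<sigma> t"
  shows "dominated \<Omega> N (\<lambda>\<sigma>. f \<sigma> k)"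
  unfolding dominated_def
proof (intro exI[of _ 1] ballI allI impI)
  fix \<sigma> and t s :: real assume \<sigma>: "\<sigma> \<in> \<Omega>" and t: "0 \<le> t" and s: "s \<in> {0..t}"
  have "\<bar>f \<sigma> k s\<bar> \<le> (\<Sum>k\<in>K. \<bar>f \<sigma> k s\<bar>)"
    by (rule member_le_sum) (use assms in auto)
  also have "\<dots> \<le> sup_norm K (f \<sigma>) t"
    by (rule sum_abs_le_sup_norm) (use assms(1) bounded[OF \<sigma> t] s in auto)
  also have "\<dots> \<le> N \<sigma> t"
    by (rule le_N[OF \<sigma> t])
  finally show "\<bar>f \<sigma> k s\<bar> \<le> 1 * N \<sigma> t"
    by simp
qed

section \<open>Well-founded induction along the edges of a tree\<close>

lemma closed_walk_imp_has_cycle: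
  fixes v :: "nat \<Rightarrow> 'a"
  assumes walk: "\<And>k. k < m \<Longrightarrow> adj (v k) (v (Suc k))" and closed: "v m = v 0" and "0 < m"
    and no_backtrack: "\<And>k. k + 2 \<le> m \<Longrightarrow> v (k + 2) \<noteq> v k"
    and irrefl: "\<And>a. \<not> adj a a" and in_V: "v ` {..m} \<subseteq> V"
  shows "ug_has_cycle V adj"
proof -
  \<comment> \<open>The walk up to its first repeated vertex closes a cycle.\<close>
  define repeats where "repeats k \<longleftrightarrow> (\<exists>a<k. v a = v k)" for k
  have "repeats m"
    using closed \<open>0 < m\<close> unfolding repeats_def by auto
  then obtain k where "repeats k" and first: "\<And>k'. k' < k \<Longrightarrow> \<not> repeats k'"
    by (metis exists_least_iff)
  then obtain a where a: "a < k" "v a = v k"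
    unfolding repeats_def by blast
  have "k \<le> m"
    using first \<open>repeats m\<close> by (meson not_le)
  define vs where "vs = map v [a..<k]"
  have "distinct vs"
    unfolding vs_def distinct_map
  proof
    show "inj_on v (set [a..<k])"
      by (rule inj_onI) (use first in \<open>simp add: repeats_def, metis linorder_neqE_nat\<close>)
  qed simp
  moreover have "length vs \<ge> 3"
  proof -
    have "Suc a \<noteq> k"
      using walk irrefl a \<open>k \<le> m\<close> by (metis order_less_le_trans)
    moreover have "a + 2 \<noteq> k"
      using no_backtrack a \<open>k \<le> m\<close> by metis
    ultimately show ?thesis
      using a by (simp add: vs_def)
  qed
  moreover have "set vs \<subseteq> V"
    using in_V \<open>k \<le> m\<close> by (auto simp: vs_def)
  moreover have "adj (vs ! l) (vs ! ((l + 1) mod length vs))" if l: "l < length vs" for l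
  proof (cases "l + 1 < length vs")
    case True
    then show ?thesis
      using walk \<open>k \<le> m\<close> by (simp add: vs_def)
  next
    case False
    then have "l + 1 = length vs"
      using l by simp
    then have "Suc (a + l) = k" "(l + 1) mod length vs = 0"
      by (simp_all add: vs_def)
    moreover have "vs ! 0 = v a" "vs ! l = v (a + l)"
      using a l by (simp_all add: vs_def)
    ultimately show ?thesis
      using walk a \<open>k \<le> m\<close> by (metis Suc_le_lessD)
  qed
  ultimately show ?thesis
    unfolding ug_has_cycle_def by blast
qed

text \<open>For \<open>e = (i, j)\<close> and \<open>e' = (i', j')\<close>, \<open>(e', e) \<in> upstream E\<close> says that
  \<open>i' - j' - i - j\<close> is a path. The bound along \<open>e\<close> is derived from the bounds along the
  edges upstream of \<open>e\<close>.\<close>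

definition upstream :: "('a \<times> 'b) set \<Rightarrow> (('a \<times> 'b) \<times> ('a \<times> 'b)) set" where
  "upstream E = {(e', e). e \<in> E \<and> e' \<in> E \<and> (fst e, snd e') \<in> E \<and> snd e' \<noteq> snd e \<and> fst e' \<noteq> fst e}"

lemma upstream_cycle_imp_has_cycle:
  assumes E: "E \<subseteq> I \<times> J" "I \<inter> J = {}" and "0 < n" and closed: "f n = f 0"
    and chain: "\<And>q. q < n \<Longrightarrow> (f (Suc q), f q) \<in> upstream E"
  shows "ug_has_cycle (I \<union> J) (bip_adj E)"
proof -
  have "f q \<in> E" if "q < n" for q
    using chain[OF that] by (auto simp: upstream_def)
  then have f_E: "f q \<in> I \<times> J" if "q \<le> n" for q
    using that closed \<open>0 < n\<close> E(1) by (cases "q = n") auto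
  \<comment> \<open>Visiting the edges \<open>f 0, f 1, \<dots>\<close> alternately at their \<open>J\<close>- and \<open>I\<close>-ends gives
    a closed walk that never immediately returns to the vertex it came from.\<close>
  define v where "v k = (if even k then snd (f (k div 2)) else fst (f (k div 2)))" for k
  have v_even: "v (2 * q) = snd (f q)" and v_odd: "v (Suc (2 * q)) = fst (f q)" for q
    by (simp_all add: v_def)
  have parity: "\<exists>q. k = 2 * q \<or> k = Suc (2 * q)" for k :: nat
    by presburger
  show ?thesis
  proof (rule closed_walk_imp_has_cycle[where m = "2 * n"])
    fix k assume "k < 2 * n"
    moreover obtain q where "k = 2 * q \<or> k = Suc (2 * q)"
      using parity by blast
    ultimately show "bip_adj E (v k) (v (Suc k))"
      using f_E[of q] chain[of q] v_even v_odd[of q] v_even[of "Suc q"]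
      by (auto simp: bip_adj_def upstream_def mem_Times_iff)
  next
    fix k assume "k + 2 \<le> 2 * n"
    moreover obtain q where "k = 2 * q \<or> k = Suc (2 * q)"
      using parity by blast
    ultimately show "v (k + 2) \<noteq> v k"
      using chain[of q] v_even v_odd[of q] v_odd[of "Suc q"] v_even[of "Suc q"]
      by (auto simp: upstream_def)
  next
    show "v ` {..2 * n} \<subseteq> I \<union> J"
      using f_E by (auto simp: v_def mem_Times_iff)
  qed (use closed \<open>0 < n\<close> E in \<open>auto simp: v_def bip_adj_def\<close>)
qed

lemma wf_upstream:
  assumes E: "E \<subseteq> I \<times> J" "finite E" "I \<inter> J = {}"
    and acyclic: "\<not> ug_has_cycle (I \<union> J) (bip_adj E)"
  shows "wf (upstream E)"
proof (rule finite_acyclic_wf)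
  have "upstream E \<subseteq> E \<times> E"
    unfolding upstream_def by auto
  then show "finite (upstream E)"
    using E(2) finite_subset by blast
  show "acyclic (upstream E)"
    unfolding acyclic_def
  proof (intro allI notI)
    fix e assume "(e, e) \<in> (upstream E)\<^sup>+"
    then have "(e, e) \<in> ((upstream E)\<inverse>)\<^sup>+"
      by (simp add: trancl_converse)
    then obtain n where "0 < n" "(e, e) \<in> ((upstream E)\<inverse>) ^^ n"
      using trancl_power by blast
    then obtain f where "f 0 = e" "f n = e" "\<forall>q<n. (f (Suc q), f q) \<in> upstream E"
      using relpow_fun_conv by (metis converse_iff)
    with E(1,3) \<open>0 < n\<close> acyclic show False
      using upstream_cycle_imp_has_cycle[of E I J n f] by auto
  qed
qed

section \<open>Solutions of the network equations\<close>

locale network_solutions =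
  fixes I J :: "nat set" and E :: "(nat \<times> nat) set"
    and \<mu> :: "nat \<Rightarrow> nat \<Rightarrow> real" and \<theta> :: "nat \<Rightarrow> real" and \<Omega> :: "'s set"
    and w x y z :: "'s \<Rightarrow> nat \<Rightarrow> real \<Rightarrow> real" and \<psi> :: "'s \<Rightarrow> nat \<Rightarrow> nat \<Rightarrow> real \<Rightarrow> real"
  assumes finite_I: "finite I" and finite_J: "finite J" and disjoint: "I \<inter> J = {}"
    and E_sub: "E \<subseteq> I \<times> J" and acyclic: "\<not> ug_has_cycle (I \<union> J) (bip_adj E)"
    and mu_pos: "\<And>i j. (i, j) \<in> E \<Longrightarrow> 0 < \<mu> i j"
    and meas_w: "\<And>\<sigma> i. \<sigma> \<in> \<Omega> \<Longrightarrow> i \<in> I \<Longrightarrow> meas_locbdd (w \<sigma> i)"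
    and meas_x: "\<And>\<sigma> i. \<sigma> \<in> \<Omega> \<Longrightarrow> i \<in> I \<Longrightarrow> meas_locbdd (x \<sigma> i)"
    and meas_y: "\<And>\<sigma> i. \<sigma> \<in> \<Omega> \<Longrightarrow> i \<in> I \<Longrightarrow> meas_locbdd (y \<sigma> i)"
    and meas_z: "\<And>\<sigma> j. \<sigma> \<in> \<Omega> \<Longrightarrow> j \<in> J \<Longrightarrow> meas_locbdd (z \<sigma> j)"
    and meas_psi: "\<And>\<sigma> i j. \<sigma> \<in> \<Omega> \<Longrightarrow> i \<in> I \<Longrightarrow> j \<in> J \<Longrightarrow> meas_locbdd (\<psi> \<sigma> i j)"
    and psi_off_E: "\<And>\<sigma> i j s. \<sigma> \<in> \<Omega> \<Longrightarrow> i \<in> I \<Longrightarrow> j \<in> J \<Longrightarrow> (i, j) \<notin> E \<Longrightarrow> 0 \<le> s \<Longrightarrow>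
        \<psi> \<sigma> i j s = 0"
    and x_eq: "\<And>\<sigma> i s. \<sigma> \<in> \<Omega> \<Longrightarrow> i \<in> I \<Longrightarrow> 0 \<le> s \<Longrightarrow>
        x \<sigma> i s = w \<sigma> i s - (\<Sum>j\<in>J. \<mu> i j * Jint (\<psi> \<sigma> i j) s) - \<theta> i * Jint (y \<sigma> i) s"
    and row_sum: "\<And>\<sigma> i s. \<sigma> \<in> \<Omega> \<Longrightarrow> i \<in> I \<Longrightarrow> 0 \<le> s \<Longrightarrow>
        (\<Sum>j\<in>J. \<psi> \<sigma> i j s) = x \<sigma> i s - y \<sigma> i s"
    and column_sum: "\<And>\<sigma> j s. \<sigma> \<in> \<Omega> \<Longrightarrow> j \<in> J \<Longrightarrow> 0 \<le> s \<Longrightarrow>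
        (\<Sum>i\<in>I. \<psi> \<sigma> i j s) = - z \<sigma> j s"
begin

definition data_norm :: "'s \<Rightarrow> real \<Rightarrow> real" where
  "data_norm \<sigma> t =
     sup_norm I (w \<sigma>) t + sup_norm I (\<lambda>i. Jint (y \<sigma> i)) t + sup_norm J (\<lambda>j. Jint (z \<sigma> j)) t"

lemma
  assumes "\<sigma> \<in> \<Omega>" "0 \<le> t"
  shows sup_norm_w_le_data_norm: "sup_norm I (w \<sigma>) t \<le> data_norm \<sigma> t"
    and sup_norm_Jint_y_le_data_norm: "sup_norm I (\<lambda>i. Jint (y \<sigma> i)) t \<le> data_norm \<sigma> t"
    and sup_norm_Jint_z_le_data_norm: "sup_norm J (\<lambda>j. Jint (z \<sigma> j)) t \<le> data_norm \<sigma> t"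
proof -
  have "0 \<le> sup_norm I (w \<sigma>) t"
    using assms meas_w by (intro sup_norm_nonneg[OF finite_I]) (auto simp: meas_locbdd_def)
  moreover have "0 \<le> sup_norm I (\<lambda>i. Jint (y \<sigma> i)) t"
    using assms meas_y by (intro sup_norm_nonneg[OF finite_I] Jint_locally_bounded)
  moreover have "0 \<le> sup_norm J (\<lambda>j. Jint (z \<sigma> j)) t"
    using assms meas_z by (intro sup_norm_nonneg[OF finite_J] Jint_locally_bounded)
  ultimately show "sup_norm I (w \<sigma>) t \<le> data_norm \<sigma> t"
    and "sup_norm I (\<lambda>i. Jint (y \<sigma> i)) t \<le> data_norm \<sigma> t"
    and "sup_norm J (\<lambda>j. Jint (z \<sigma> j)) t \<le> data_norm \<sigma> t"
    unfolding data_norm_def by linarith+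
qed

lemma dominated_w: "i \<in> I \<Longrightarrow> dominated \<Omega> data_norm (\<lambda>\<sigma>. w \<sigma> i)"
  using meas_w sup_norm_w_le_data_norm
  by (intro dominated_by_sup_norm[OF finite_I]) (auto simp: meas_locbdd_def)

lemma dominated_Jint_y: "i \<in> I \<Longrightarrow> dominated \<Omega> data_norm (\<lambda>\<sigma>. Jint (y \<sigma> i))"
  using meas_y sup_norm_Jint_y_le_data_norm
  by (intro dominated_by_sup_norm[OF finite_I, where f="\<lambda>\<sigma> i. Jint (y \<sigma> i)"] Jint_locally_bounded) auto

lemma dominated_Jint_z: "j \<in> J \<Longrightarrow> dominated \<Omega> data_norm (\<lambda>\<sigma>. Jint (z \<sigma> j))"
  using meas_z sup_norm_Jint_z_le_data_norm
  by (intro dominated_by_sup_norm[OF finite_J, where f="\<lambda>\<sigma> j. Jint (z \<sigma> j)"] Jint_locally_bounded) auto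


lemma wf_upstream_E: "wf (upstream E)"
  using finite_subset[OF E_sub] finite_I finite_J
  by (intro wf_upstream[OF E_sub _ disjoint acyclic]) auto

lemma Jint_row_sum:
  assumes "\<sigma> \<in> \<Omega>" "i \<in> I" "0 \<le> s"
  shows "(\<Sum>j\<in>J. Jint (\<psi> \<sigma> i j) s) = Jint (x \<sigma> i) s - Jint (y \<sigma> i) s"
proof -
  have "(\<Sum>j\<in>J. Jint (\<psi> \<sigma> i j) s) = Jint (\<lambda>r. \<Sum>j\<in>J. \<psi> \<sigma> i j r) s"
    by (rule Jint_sum[symmetric]) (use assms finite_J meas_psi in auto)
  also have "\<dots> = Jint (\<lambda>r. x \<sigma> i r - y \<sigma> i r) s"
    by (rule Jint_cong) (use assms row_sum in auto)
  also have "\<dots> = Jint (x \<sigma> i) s - Jint (y \<sigma> i) s"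
    by (rule Jint_diff) (use assms meas_x meas_y in auto)
  finally show ?thesis .
qed

lemma Jint_column_sum:
  assumes "\<sigma> \<in> \<Omega>" "j \<in> J" "0 \<le> s"
  shows "(\<Sum>i\<in>I. Jint (\<psi> \<sigma> i j) s) = - Jint (z \<sigma> j) s"
proof -
  have "(\<Sum>i\<in>I. Jint (\<psi> \<sigma> i j) s) = Jint (\<lambda>r. \<Sum>i\<in>I. \<psi> \<sigma> i j r) s"
    by (rule Jint_sum[symmetric]) (use assms finite_I meas_psi in auto)
  also have "\<dots> = Jint (\<lambda>r. - z \<sigma> j r) s"
    by (rule Jint_cong) (use assms column_sum in auto)
  also have "\<dots> = - Jint (z \<sigma> j) s"
    by (rule Jint_uminus) (use assms meas_z in auto)
  finally show ?thesis .
qed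

lemma dominated_Jint_psi_off_E:
  assumes "i \<in> I" "j \<in> J" "(i, j) \<notin> E"
  shows "dominated \<Omega> data_norm (\<lambda>\<sigma>. Jint (\<psi> \<sigma> i j))"
proof (rule dominated_cong[OF dominated_zero])
  fix \<sigma> and s :: real assume "\<sigma> \<in> \<Omega>" "0 \<le> s"
  then have "Jint (\<psi> \<sigma> i j) s = Jint (\<lambda>_. 0) s"
    using assms psi_off_E by (intro Jint_cong) auto
  then show "Jint (\<psi> \<sigma> i j) s = 0"
    by (simp add: Jint_def)
qed

lemma dominated_Jint_psi_from_column:
  assumes i: "i \<in> I" and j: "j \<in> J"
    and others: "\<And>i'. i' \<in> I - {i} \<Longrightarrow> dominated \<Omega> data_norm (\<lambda>\<sigma>. Jint (\<psi> \<sigma> i' j))"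
  shows "dominated \<Omega> data_norm (\<lambda>\<sigma>. Jint (\<psi> \<sigma> i j))"
proof -
  have "dominated \<Omega> data_norm (\<lambda>\<sigma> s. - Jint (z \<sigma> j) s - (\<Sum>i'\<in>I - {i}. Jint (\<psi> \<sigma> i' j) s))"
    using finite_I others
    by (intro dominated_diff dominated_uminus dominated_sum dominated_Jint_z[OF j]) auto
  then show ?thesis
  proof (rule dominated_cong)
    fix \<sigma> and s :: real assume "\<sigma> \<in> \<Omega>" "0 \<le> s"
    then show "Jint (\<psi> \<sigma> i j) s = - Jint (z \<sigma> j) s - (\<Sum>i'\<in>I - {i}. Jint (\<psi> \<sigma> i' j) s)"
      using Jint_column_sum[of \<sigma> j s] sum.remove[OF finite_I i, of "\<lambda>i'. Jint (\<psi> \<sigma> i' j) s"] j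
      by simp
  qed
qed

lemma dominated_Jint_psi_from_row:
  assumes ij: "(i, j) \<in> E"
    and others: "\<And>j'. j' \<in> J - {j} \<Longrightarrow> dominated \<Omega> data_norm (\<lambda>\<sigma>. Jint (\<psi> \<sigma> i j'))"
  shows "dominated \<Omega> data_norm (\<lambda>\<sigma>. Jint (\<psi> \<sigma> i j))"
proof -
  have i: "i \<in> I" and j: "j \<in> J"
    using ij E_sub by auto
  define G where "G \<sigma> s = (\<Sum>j'\<in>J - {j}. Jint (\<psi> \<sigma> i j') s)" for \<sigma> s
  have G: "dominated \<Omega> data_norm G"
    unfolding G_def using finite_J others by (intro dominated_sum) auto
  have psi_eq: "Jint (\<psi> \<sigma> i j) s = Jint (x \<sigma> i) s - Jint (y \<sigma> i) s - G \<sigma> s"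
    if "\<sigma> \<in> \<Omega>" "0 \<le> s" for \<sigma> s
    using Jint_row_sum[OF that(1) i that(2)] sum.remove[OF finite_J j, of "\<lambda>j'. Jint (\<psi> \<sigma> i j') s"]
    by (simp add: G_def)
  \<comment> \<open>Substituting \<open>psi_eq\<close> into the equation for \<open>x\<^sub>i\<close> leaves \<open>x\<^sub>i = g - \<mu>\<^sub>i\<^sub>j * Jint x\<^sub>i\<close>.\<close>
  define g where "g \<sigma> s = w \<sigma> i s + \<mu> i j * (Jint (y \<sigma> i) s + G \<sigma> s)
      - (\<Sum>j'\<in>J - {j}. \<mu> i j' * Jint (\<psi> \<sigma> i j') s) - \<theta> i * Jint (y \<sigma> i) s" for \<sigma> s
  have "dominated \<Omega> data_norm g"
    unfolding g_def using finite_J others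
    by (intro dominated_diff dominated_add dominated_cmult dominated_sum dominated_w[OF i]
        dominated_Jint_y[OF i] G) auto
  moreover have "x \<sigma> i s = g \<sigma> s - \<mu> i j * Jint (x \<sigma> i) s" if "\<sigma> \<in> \<Omega>" "0 \<le> s" for \<sigma> s
    using x_eq[OF that(1) i that(2)] psi_eq[OF that]
      sum.remove[OF finite_J j, of "\<lambda>j'. \<mu> i j' * Jint (\<psi> \<sigma> i j') s"]
    by (simp add: g_def algebra_simps)
  ultimately have "dominated \<Omega> data_norm (\<lambda>\<sigma>. Jint (x \<sigma> i))"
    using mu_pos[OF ij] meas_x[OF _ i] by (intro dominated_Jint_of_linear_feedback) auto
  then have "dominated \<Omega> data_norm (\<lambda>\<sigma> s. Jint (x \<sigma> i) s - Jint (y \<sigma> i) s - G \<sigma> s)"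
    by (intro dominated_diff dominated_Jint_y[OF i] G)
  then show ?thesis
    by (rule dominated_cong) (use psi_eq in auto)
qed

lemma dominated_Jint_psi_edge:
  assumes "e \<in> E"
  shows "dominated \<Omega> data_norm (\<lambda>\<sigma>. Jint (\<psi> \<sigma> (fst e) (snd e)))"
  using wf_upstream_E assms
proof (induction e rule: wf_induct_rule)
  case (less e)
  obtain i j where e: "e = (i, j)"
    by force
  have i: "i \<in> I"
    using less e E_sub by auto
  have "dominated \<Omega> data_norm (\<lambda>\<sigma>. Jint (\<psi> \<sigma> i j'))" if j': "j' \<in> J - {j}" for j'
  proof (cases "(i, j') \<in> E")
    case True
    show ?thesis
    proof (rule dominated_Jint_psi_from_column[OF i])
      fix i' assume i': "i' \<in> I - {i}"
      show "dominated \<Omega> data_norm (\<lambda>\<sigma>. Jint (\<psi> \<sigma> i' j'))"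
      proof (cases "(i', j') \<in> E")
        case True
        then have "((i', j'), e) \<in> upstream E"
          using \<open>(i, j') \<in> E\<close> less e i' j' by (auto simp: upstream_def)
        with True show ?thesis
          using less by fastforce
      qed (use i' j' dominated_Jint_psi_off_E in auto)
    qed (use j' in auto)
  qed (use i j' dominated_Jint_psi_off_E in auto)
  then show ?case
    using dominated_Jint_psi_from_row less e by auto
qed


lemma dominated_Jint_psi:
  assumes "i \<in> I" "j \<in> J"
  shows "dominated \<Omega> data_norm (\<lambda>\<sigma>. Jint (\<psi> \<sigma> i j))"
  using assms dominated_Jint_psi_off_E dominated_Jint_psi_edge[of "(i, j)"]
  by (cases "(i, j) \<in> E") auto

lemma dominated_x:
  assumes i: "i \<in> I"
  shows "dominated \<Omega> data_norm (\<lambda>\<sigma>. x \<sigma> i)"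
proof -
  have "dominated \<Omega> data_norm
      (\<lambda>\<sigma> s. w \<sigma> i s - (\<Sum>j\<in>J. \<mu> i j * Jint (\<psi> \<sigma> i j) s) - \<theta> i * Jint (y \<sigma> i) s)"
    using finite_J dominated_Jint_psi[OF i]
    by (intro dominated_diff dominated_sum dominated_cmult dominated_w[OF i] dominated_Jint_y[OF i]) auto
  then show ?thesis
    by (rule dominated_cong) (use x_eq i in auto)
qed

lemma uniform_bound:
  "\<exists>K. \<forall>\<sigma>\<in>\<Omega>. \<forall>t\<ge>0.
     (\<Sum>i\<in>I. \<Sum>j\<in>J. \<bar>Jint (\<psi> \<sigma> i j) t\<bar>) + (\<Sum>i\<in>I. \<bar>x \<sigma> i t\<bar>) \<le> K * data_norm \<sigma> t"
proof -
  have "dominated \<Omega> data_norm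
      (\<lambda>\<sigma> t. (\<Sum>i\<in>I. \<Sum>j\<in>J. \<bar>Jint (\<psi> \<sigma> i j) t\<bar>) + (\<Sum>i\<in>I. \<bar>x \<sigma> i t\<bar>))"
    using finite_I finite_J
    by (intro dominated_add dominated_sum dominated_abs dominated_Jint_psi dominated_x) auto
  then show ?thesis
    unfolding dominated_def by (meson abs_ge_self atLeastAtMost_iff order_refl order_trans)
qed

end

theorem proposition1:
  fixes nI nJ :: nat and E :: "(nat \<times> nat) set"
    and \<mu> :: "nat \<Rightarrow> nat \<Rightarrow> real" and \<theta> :: "nat \<Rightarrow> real"
  defines "Iset \<equiv> {1..nI}" and "Jset \<equiv> {nI+1..nI+nJ}"
  assumes E_sub: "E \<subseteq> Iset \<times> Jset"
    and tree: "ug_tree (Iset \<union> Jset) (bip_adj E)"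
    and mu_pos: "\<And>i j. (i, j) \<in> E \<Longrightarrow> \<mu> i j > 0"
    and mu_zero: "\<And>i j. (i, j) \<notin> E \<Longrightarrow> \<mu> i j = 0"
    and theta_nn: "\<And>i. i \<in> Iset \<Longrightarrow> \<theta> i \<ge> 0"
  shows "\<exists>m1::real. \<forall>(w::nat \<Rightarrow> real \<Rightarrow> real) (x::nat \<Rightarrow> real \<Rightarrow> real)
            (y::nat \<Rightarrow> real \<Rightarrow> real) (z::nat \<Rightarrow> real \<Rightarrow> real)
            (\<psi>::nat \<Rightarrow> nat \<Rightarrow> real \<Rightarrow> real).
     ((\<forall>i\<in>Iset. meas_locbdd (w i) \<and> meas_locbdd (x i) \<and> meas_locbdd (y i)) \<and>
      (\<forall>j\<in>Jset. meas_locbdd (z j)) \<and>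
      (\<forall>i\<in>Iset. \<forall>j\<in>Jset. meas_locbdd (\<psi> i j)) \<and>
      (\<forall>i\<in>Iset. \<forall>j\<in>Jset. (i, j) \<notin> E \<longrightarrow> (\<forall>s\<ge>0. \<psi> i j s = 0)) \<and>
      (\<forall>i\<in>Iset. \<forall>t\<ge>0. x i t = w i t - (\<Sum>j\<in>Jset. \<mu> i j * Jint (\<psi> i j) t)
                                  - \<theta> i * Jint (y i) t) \<and>
      (\<forall>i\<in>Iset. \<forall>t\<ge>0. (\<Sum>j\<in>Jset. \<psi> i j t) = x i t - y i t) \<and>
      (\<forall>j\<in>Jset. \<forall>t\<ge>0. (\<Sum>i\<in>Iset. \<psi> i j t) = - z j t))
     \<longrightarrow> (\<forall>t\<ge>0.
           (\<Sum>i\<in>Iset. \<Sum>j\<in>Jset. \<bar>Jint (\<psi> i j) t\<bar>) + (\<Sum>i\<in>Iset. \<bar>x i t\<bar>)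
           \<le> m1 * ((SUP s\<in>{0..t}. \<Sum>i\<in>Iset. \<bar>w i s\<bar>)
                   + (SUP s\<in>{0..t}. \<Sum>i\<in>Iset. \<bar>Jint (y i) s\<bar>)
                   + (SUP s\<in>{0..t}. \<Sum>j\<in>Jset. \<bar>Jint (z j) s\<bar>)))"
    (is "\<exists>m1. \<forall>w x y z \<psi>. ?solution w x y z \<psi> \<longrightarrow> _")
proof -
  define \<Omega> where "\<Omega> = {(w, x, y, z, \<psi>). ?solution w x y z \<psi>}"
  interpret network_solutions Iset Jset E \<mu> \<theta> \<Omega>
      "\<lambda>(w, x, y, z, \<psi>). w" "\<lambda>(w, x, y, z, \<psi>). x" "\<lambda>(w, x, y, z, \<psi>). y"
      "\<lambda>(w, x, y, z, \<psi>). z" "\<lambda>(w, x, y, z, \<psi>). \<psi>"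
    using E_sub mu_pos tree by unfold_locales (auto simp: \<Omega>_def Iset_def Jset_def ug_tree_def)
  show ?thesis
    using uniform_bound by (auto simp: \<Omega>_def data_norm_def sup_norm_def)
qed

end
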